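(* Under the assumptions of the multinomial lattice ($u>d>0$, $a_l=u^{L-l}d^{l-1}$, $a_L<1+R<a_1$, $a_l\neq 1+R$ for all $l$), let $X=(K-S_N)^+$ (European put) or $X=(S_N-K)^+$ (European call) with strike $K\ge0$ and maturity $N$, priced by $\pi_Q(0,X)=(1+R)^{-N}E^{Q^N}[X]$. Then for every strike $K$ and every risk-neutral $Q\in\mathcal{D}(\{a_1,\ldots,a_L\},1+R)$, $\pi_{Q_L}(0,X)\le\pi_Q(0,X)\le\pi_{Q_U}(0,X)$, where $Q_L=Q_{l^*,l^*+1}$ with $l^*$ the largest index such that $a_{l^*}>1+R$, and $Q_U=Q_{1,L}$.
   Context: Under $Q^N$, $S_N=S_0\prod_{i=1}^NZ_i$ with $Z_i$ i.i.d. with law $Q=(q_1,\ldots,q_L)$ on $\{a_1,\ldots,a_L\}$. $\mathcal{D}(\mathcal{A},m)$ is the set of probability mass functions on the finite set $\mathcal{A}$ with mean $m$. For $l_1<l_2$ with $a_{l_2}<1+R<a_{l_1}$, $Q_{l_1,l_2}$ is the probability vector with $q_{l_1}=\frac{(1+R)-a_{l_2}}{a_{l_1}-a_{l_2}}$, $q_{l_2}=1-q_{l_1}$, $q_l=0$ otherwise. *)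

theory Defs
  imports Complex_Main "HOL-Library.FuncSet"
begin

definition lat_a :: "real \<Rightarrow> real \<Rightarrow> nat \<Rightarrow> nat \<Rightarrow> real" where
  "lat_a u d L l = u ^ (L - l) * d ^ (l - 1)"

definition mean_D :: "(nat \<Rightarrow> real) \<Rightarrow> nat \<Rightarrow> real \<Rightarrow> (nat \<Rightarrow> real) set" where
  "mean_D a L m = {q. (\<forall>l\<in>{1..L}. 0 \<le> q l) \<and> (\<Sum>l=1..L. q l) = 1
                      \<and> (\<Sum>l=1..L. q l * a l) = m}"

text \<open>Expectation under Q^N of f(S_N), S_N = S_0 * prod Z_i, Z_i i.i.d. with law q on a_1..a_L.\<close>
definition exp_QN :: "(nat \<Rightarrow> real) \<Rightarrow> nat \<Rightarrow> (nat \<Rightarrow> real) \<Rightarrow> real \<Rightarrow> nat \<Rightarrow> (real \<Rightarrow> real) \<Rightarrow> real" where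
  "exp_QN a L q S0 N f =
     (\<Sum>p\<in>PiE {..<N} (\<lambda>_. {1..L}). (\<Prod>i<N. q (p i)) * f (S0 * (\<Prod>i<N. a (p i))))"

definition price0 :: "real \<Rightarrow> (nat \<Rightarrow> real) \<Rightarrow> nat \<Rightarrow> (nat \<Rightarrow> real) \<Rightarrow> real \<Rightarrow> nat \<Rightarrow> (real \<Rightarrow> real) \<Rightarrow> real" where
  "price0 R a L q S0 N f = exp_QN a L q S0 N f / (1 + R) ^ N"

text \<open>Q_{l1,l2}: two-point risk-neutral measure on a_{l1}, a_{l2}.\<close>
definition Q2 :: "real \<Rightarrow> (nat \<Rightarrow> real) \<Rightarrow> nat \<Rightarrow> nat \<Rightarrow> nat \<Rightarrow> real" where
  "Q2 R a l1 l2 l =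
     (if l = l1 then ((1 + R) - a l2) / (a l1 - a l2)
      else if l = l2 then 1 - ((1 + R) - a l2) / (a l1 - a l2)
      else 0)"

end

theory Submission
  imports Defs "HOL-Analysis.Convex"
begin

text \<open>The price is the N-fold iterate of the one-period expectation operator applied to the payoff,
and this operator preserves convexity. Hence prices are monotone in the convex order of the
one-period law. Among laws on the lattice with mean \<open>1 + R\<close>, the one on the extreme points
\<open>a\<^sub>1, a\<^sub>L\<close> is maximal, because the chord of a convex function through the extreme points lies
above its graph on \<open>[a\<^sub>L, a\<^sub>1]\<close>; the one on the two points adjacent to \<open>1 + R\<close> is minimal, because
no \<open>a\<^sub>l\<close> lies strictly between them and outside that interval the chord lies below the graph.\<close>

lemma convex_on_max:
  assumes "convex_on S f" "convex_on S g"
  shows "convex_on S (\<lambda>x. max (f x) (g x))"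
  unfolding convex_on_def
proof (intro conjI ballI allI impI)
  show "convex S" using assms(1) by (rule convex_on_imp_convex)
  fix x y and u v :: real
  assume xy: "x \<in> S" "y \<in> S" and uv: "0 \<le> u" "0 \<le> v" "u + v = 1"
  have "u * f x + v * f y \<le> u * max (f x) (g x) + v * max (f y) (g y)"
    "u * g x + v * g y \<le> u * max (f x) (g x) + v * max (f y) (g y)"
    using uv by (intro add_mono mult_left_mono; simp)+
  then show "max (f (u *\<^sub>R x + v *\<^sub>R y)) (g (u *\<^sub>R x + v *\<^sub>R y))
      \<le> u * max (f x) (g x) + v * max (f y) (g y)"
    using assms xy uv unfolding convex_on_def by (meson max.bounded_iff order_trans)
qed

lemma convex_on_put_payoff: "convex_on UNIV (\<lambda>s::real. max (K - s) 0)"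
  by (intro convex_on_max convex_on_diff) (simp_all add: convex_on_const concave_on_ident)

lemma convex_on_call_payoff: "convex_on UNIV (\<lambda>s::real. max (s - K) 0)"
  by (intro convex_on_max convex_on_diff) (simp_all add: convex_on_ident concave_on_const convex_on_const)

lemma convex_on_scaled_arg:
  assumes "convex_on UNIV g"
  shows "convex_on UNIV (\<lambda>x::real. g (c * x))"
  unfolding convex_on_def
proof (intro conjI allI impI ballI)
  fix x y u v :: real assume uv: "0 \<le> u" "0 \<le> v" "u + v = 1"
  have "c * (u *\<^sub>R x + v *\<^sub>R y) = u *\<^sub>R (c * x) + v *\<^sub>R (c * y)"
    by (simp add: algebra_simps)
  then show "g (c * (u *\<^sub>R x + v *\<^sub>R y)) \<le> u * g (c * x) + v * g (c * y)"
    using assms uv unfolding convex_on_def by (metis UNIV_I)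
qed simp

lemma convex_on_weighted_sum:
  assumes "finite A" "convex S" "\<And>i. i \<in> A \<Longrightarrow> 0 \<le> w i" "\<And>i. i \<in> A \<Longrightarrow> convex_on S (f i)"
  shows "convex_on S (\<lambda>x. \<Sum>i\<in>A. w i * f i x)"
  using assms(1,3,4)
  by (induction A rule: finite_induct) (simp_all add: convex_on_const assms(2) convex_on_add convex_on_cmul)

definition chord :: "(real \<Rightarrow> real) \<Rightarrow> real \<Rightarrow> real \<Rightarrow> real \<Rightarrow> real" where
  "chord g x y z = g x + (g y - g x) / (y - x) * (z - x)"

lemma chord_scaled:
  assumes "x \<noteq> y"
  shows "(y - x) * chord g x y z = (y - z) * g x + (z - x) * g y"
  using assms by (simp add: chord_def field_simps)

lemma convex_on_le_chord:
  assumes "convex_on UNIV g" "x \<le> z" "z \<le> y"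
  shows "g z \<le> chord g x y z"
proof -
  have "g z \<le> (g y - g x) / (y - x) * (z - x) + g x"
    using assms by (intro convex_onD_Icc' convex_on_subset[OF assms(1)]) auto
  then show ?thesis by (simp add: chord_def)
qed

lemma convex_on_three_points:
  assumes "convex_on UNIV g" "x \<le> z" "z \<le> y"
  shows "(y - x) * g z \<le> (y - z) * g x + (z - x) * g y"
proof (cases "x = y")
  case False
  have "(y - x) * g z \<le> (y - x) * chord g x y z"
    using assms by (intro mult_left_mono convex_on_le_chord) auto
  then show ?thesis using chord_scaled[OF False] by simp
qed (use assms in simp)

lemma chord_le_convex_on:
  assumes g: "convex_on UNIV g" and "x < y" "z \<notin> {x<..<y}"
  shows "chord g x y z \<le> g z"
proof -
  consider "z \<le> x" | "y \<le> z" using assms(3) by fastforce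
  then have "(y - z) * g x + (z - x) * g y \<le> (y - x) * g z"
  proof cases
    case 1
    then show ?thesis using convex_on_three_points[OF g 1, of y] \<open>x < y\<close> by (simp add: algebra_simps)
  next
    case 2
    then show ?thesis using convex_on_three_points[OF g _ 2, of x] \<open>x < y\<close> by (simp add: algebra_simps)
  qed
  then have "(y - x) * chord g x y z \<le> (y - x) * g z"
    using chord_scaled[of x y] \<open>x < y\<close> by simp
  then show ?thesis using \<open>x < y\<close> by simp
qed

lemma sum_weighted_chord:
  assumes "(\<Sum>l\<in>A. q l) = 1" "(\<Sum>l\<in>A. q l * a l) = m"
  shows "(\<Sum>l\<in>A. q l * chord g x y (a l)) = chord g x y m"
proof -
  define c where "c = (g y - g x) / (y - x)"
  have chord_c: "chord g x y z = g x + c * (z - x)" for z by (simp add: chord_def c_def)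
  have "(\<Sum>l\<in>A. q l * chord g x y (a l)) = (\<Sum>l\<in>A. g x * q l + c * (q l * a l) - c * x * q l)"
    by (intro sum.cong) (simp_all add: chord_c algebra_simps)
  also have "\<dots> = g x * (\<Sum>l\<in>A. q l) + c * (\<Sum>l\<in>A. q l * a l) - c * x * (\<Sum>l\<in>A. q l)"
    by (simp add: sum.distrib sum_subtractf sum_distrib_left)
  finally show ?thesis using assms by (simp add: chord_c algebra_simps)
qed

lemma sum_Q2:
  assumes "finite A" "l1 \<in> A" "l2 \<in> A" "a l1 \<noteq> a l2"
  shows "(\<Sum>l\<in>A. Q2 R a l1 l2 l * g (a l)) = chord g (a l2) (a l1) (1 + R)"
proof -
  define p where "p = ((1 + R) - a l2) / (a l1 - a l2)"
  have "l1 \<noteq> l2" using assms(4) by blast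
  then have "(\<Sum>l\<in>A. Q2 R a l1 l2 l * g (a l))
      = (\<Sum>l\<in>A. (if l = l1 then p * g (a l1) else 0) + (if l = l2 then (1 - p) * g (a l2) else 0))"
    by (intro sum.cong) (auto simp: Q2_def p_def)
  also have "\<dots> = p * g (a l1) + (1 - p) * g (a l2)"
    using assms(1-3) by (simp add: sum.distrib)
  also have "\<dots> = g (a l2) + p * (g (a l1) - g (a l2))"
    by (simp add: algebra_simps)
  also have "\<dots> = chord g (a l2) (a l1) (1 + R)"
    by (simp add: chord_def p_def)
  finally show ?thesis .
qed

lemma Q2_nonneg:
  assumes "a l2 < 1 + R" "1 + R < a l1"
  shows "0 \<le> Q2 R a l1 l2 l"
  using assms unfolding Q2_def by (auto simp: field_simps)

definition convex_le :: "(nat \<Rightarrow> real) \<Rightarrow> nat set \<Rightarrow> (nat \<Rightarrow> real) \<Rightarrow> (nat \<Rightarrow> real) \<Rightarrow> bool" where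
  "convex_le a A q q' \<longleftrightarrow>
     (\<forall>g. convex_on UNIV g \<longrightarrow> (\<Sum>l\<in>A. q l * g (a l)) \<le> (\<Sum>l\<in>A. q' l * g (a l)))"

lemma convex_le_Q2_outer:
  assumes "finite A" "l1 \<in> A" "l2 \<in> A" "a l2 < 1 + R" "1 + R < a l1"
    and q: "\<And>l. l \<in> A \<Longrightarrow> 0 \<le> q l" "(\<Sum>l\<in>A. q l) = 1" "(\<Sum>l\<in>A. q l * a l) = 1 + R"
    and support: "\<And>l. l \<in> A \<Longrightarrow> a l2 \<le> a l \<and> a l \<le> a l1"
  shows "convex_le a A q (Q2 R a l1 l2)"
  unfolding convex_le_def
proof (intro allI impI)
  fix g :: "real \<Rightarrow> real" assume g: "convex_on UNIV g"
  have "(\<Sum>l\<in>A. q l * g (a l)) \<le> (\<Sum>l\<in>A. q l * chord g (a l2) (a l1) (a l))"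
    using q(1) support by (intro sum_mono mult_left_mono convex_on_le_chord[OF g]) auto
  also have "\<dots> = (\<Sum>l\<in>A. Q2 R a l1 l2 l * g (a l))"
    using assms(1-5) by (simp add: sum_weighted_chord[OF q(2,3)] sum_Q2)
  finally show "(\<Sum>l\<in>A. q l * g (a l)) \<le> (\<Sum>l\<in>A. Q2 R a l1 l2 l * g (a l))" .
qed

lemma convex_le_Q2_inner:
  assumes "finite A" "l1 \<in> A" "l2 \<in> A" "a l2 < 1 + R" "1 + R < a l1"
    and q: "\<And>l. l \<in> A \<Longrightarrow> 0 \<le> q l" "(\<Sum>l\<in>A. q l) = 1" "(\<Sum>l\<in>A. q l * a l) = 1 + R"
    and support: "\<And>l. l \<in> A \<Longrightarrow> a l \<notin> {a l2<..<a l1}"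
  shows "convex_le a A (Q2 R a l1 l2) q"
  unfolding convex_le_def
proof (intro allI impI)
  fix g :: "real \<Rightarrow> real" assume g: "convex_on UNIV g"
  have "(\<Sum>l\<in>A. Q2 R a l1 l2 l * g (a l)) = (\<Sum>l\<in>A. q l * chord g (a l2) (a l1) (a l))"
    using assms(1-5) by (simp add: sum_weighted_chord[OF q(2,3)] sum_Q2)
  also have "\<dots> \<le> (\<Sum>l\<in>A. q l * g (a l))"
    using q(1) support assms(4,5) by (intro sum_mono mult_left_mono chord_le_convex_on[OF g]) auto
  finally show "(\<Sum>l\<in>A. Q2 R a l1 l2 l * g (a l)) \<le> (\<Sum>l\<in>A. q l * g (a l))" .
qed

definition step_expectation :: "(nat \<Rightarrow> real) \<Rightarrow> nat \<Rightarrow> (nat \<Rightarrow> real) \<Rightarrow> (real \<Rightarrow> real) \<Rightarrow> real \<Rightarrow> real" where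
  "step_expectation a L q h x = (\<Sum>l\<in>{1..L}. q l * h (x * a l))"

lemma exp_QN_Suc:
  "exp_QN a L q S0 (Suc N) f = (\<Sum>l\<in>{1..L}. q l * exp_QN a L q (S0 * a l) N f)"
proof -
  let ?P = "PiE {..<N} (\<lambda>_. {1..L})"
  have extend: "(\<Prod>i<Suc N. q ((p(N := l)) i)) * f (S0 * (\<Prod>i<Suc N. a ((p(N := l)) i)))
      = q l * ((\<Prod>i<N. q (p i)) * f (S0 * a l * (\<Prod>i<N. a (p i))))" for p l
  proof -
    have "(\<Prod>i<N. F ((p(N := l)) i)) = (\<Prod>i<N. F (p i))" for F :: "nat \<Rightarrow> real"
      by (intro prod.cong) auto
    then show ?thesis by (simp add: mult_ac)
  qed
  define F where "F p = (\<Prod>i<Suc N. q (p i)) * f (S0 * (\<Prod>i<Suc N. a (p i)))" for p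
  have "exp_QN a L q S0 (Suc N) f = sum F (PiE (insert N {..<N}) (\<lambda>_. {1..L}))"
    unfolding exp_QN_def F_def lessThan_Suc ..
  also have "\<dots> = sum (F \<circ> (\<lambda>(l, p). p(N := l))) ({1..L} \<times> ?P)"
    unfolding PiE_insert_eq by (rule sum.reindex[OF inj_combinator]) simp
  also have "\<dots> = (\<Sum>(l, p)\<in>{1..L} \<times> ?P. q l * ((\<Prod>i<N. q (p i)) * f (S0 * a l * (\<Prod>i<N. a (p i)))))"
    by (intro sum.cong refl) (simp only: comp_def split_beta F_def extend)
  finally show ?thesis
    by (simp add: sum.cartesian_product[symmetric] sum_distrib_left exp_QN_def)
qed

lemma exp_QN_eq_funpow: "exp_QN a L q S0 N f = (step_expectation a L q ^^ N) f S0"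
proof (induction N arbitrary: S0)
  case (Suc N)
  then show ?case by (simp only: exp_QN_Suc funpow.simps comp_def step_expectation_def)
qed (simp add: exp_QN_def)

lemma step_expectation_funpow_mono:
  assumes "\<And>l. l \<in> {1..L} \<Longrightarrow> 0 \<le> q l" "\<And>x. h x \<le> h' x"
  shows "(step_expectation a L q ^^ N) h x \<le> (step_expectation a L q ^^ N) h' x"
  using assms(2)
proof (induction N arbitrary: x)
  case (Suc N)
  then show ?case
    unfolding funpow.simps comp_def step_expectation_def
    using assms(1) by (intro sum_mono mult_left_mono) auto
qed simp

lemma convex_on_step_expectation:
  assumes "\<And>l. l \<in> {1..L} \<Longrightarrow> 0 \<le> q l" "convex_on UNIV h"
  shows "convex_on UNIV (step_expectation a L q h)"
proof -
  have "convex_on UNIV (\<lambda>x. h (x * a l))" for l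
    using convex_on_scaled_arg[OF assms(2), of "a l"] by (simp add: mult.commute)
  then show ?thesis
    unfolding step_expectation_def using assms(1) by (intro convex_on_weighted_sum) auto
qed

lemma step_expectation_funpow_convex_le:
  assumes "\<And>l. l \<in> {1..L} \<Longrightarrow> 0 \<le> q l" "\<And>l. l \<in> {1..L} \<Longrightarrow> 0 \<le> q' l"
    and "convex_le a {1..L} q q'" "convex_on UNIV h"
  shows "(step_expectation a L q ^^ N) h x \<le> (step_expectation a L q' ^^ N) h x"
  using assms(4)
proof (induction N arbitrary: h)
  case (Suc N)
  let ?T = "step_expectation a L q" and ?T' = "step_expectation a L q'"
  have one_step: "?T h y \<le> ?T' h y" for y
    using assms(3) convex_on_scaled_arg[OF Suc.prems, of y]
    unfolding convex_le_def step_expectation_def by blast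
  have "(?T ^^ Suc N) h x = (?T ^^ N) (?T h) x"
    by (simp only: funpow_Suc_right comp_def)
  also have "\<dots> \<le> (?T ^^ N) (?T' h) x"
    using assms(1) one_step by (rule step_expectation_funpow_mono)
  also have "\<dots> \<le> (?T' ^^ N) (?T' h) x"
    using assms(2) Suc by (intro Suc.IH convex_on_step_expectation)
  also have "\<dots> = (?T' ^^ Suc N) h x"
    by (simp only: funpow_Suc_right comp_def)
  finally show ?case .
qed simp

lemma price0_mono_convex_le:
  assumes "\<And>l. l \<in> {1..L} \<Longrightarrow> 0 \<le> q l" "\<And>l. l \<in> {1..L} \<Longrightarrow> 0 \<le> q' l"
    and "convex_le a {1..L} q q'" "convex_on UNIV f" "0 < 1 + R"
  shows "price0 R a L q S0 N f \<le> price0 R a L q' S0 N f"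
  unfolding price0_def exp_QN_eq_funpow
  using assms by (intro divide_right_mono step_expectation_funpow_convex_le) auto

lemma lat_a_antimono:
  assumes "0 < d" "d \<le> u" "1 \<le> i" "i \<le> j" "j \<le> L"
  shows "lat_a u d L j \<le> lat_a u d L i"
proof -
  have exps: "L - i = (L - j) + (j - i)" "j - 1 = (i - 1) + (j - i)" using assms(3-5) by auto
  have "lat_a u d L j = u ^ (L - j) * d ^ (i - 1) * d ^ (j - i)"
    unfolding lat_a_def exps(2) by (simp add: power_add mult_ac)
  also have "\<dots> \<le> u ^ (L - j) * d ^ (i - 1) * u ^ (j - i)"
    using assms(1,2) by (intro mult_left_mono power_mono) auto
  also have "\<dots> = lat_a u d L i"
    unfolding lat_a_def exps(1) by (simp add: power_add mult_ac)
  finally show ?thesis .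
qed

lemma greatest_index_above:
  fixes a :: "nat \<Rightarrow> real"
  assumes "1 \<le> L" "a L < m" "m < a 1" "\<forall>l\<in>{1..L}. a l \<noteq> m"
  defines "k \<equiv> GREATEST l. l \<in> {1..L} \<and> m < a l"
  shows "1 \<le> k" "k < L" "m < a k" "a (k + 1) < m"
proof -
  let ?P = "\<lambda>l. l \<in> {1..L} \<and> m < a l"
  have bounded: "\<And>l. ?P l \<Longrightarrow> l \<le> L" by simp
  have "?P 1" using assms(1,3) by simp
  then have "?P k" unfolding k_def by (rule GreatestI_nat[OF _ bounded])
  then show "1 \<le> k" "m < a k" by auto
  have "k \<noteq> L" using \<open>m < a k\<close> assms(2) by auto
  then show "k < L" using \<open>?P k\<close> by simp
  have "\<not> ?P (k + 1)"
  proof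
    assume "?P (k + 1)"
    then have "k + 1 \<le> k" unfolding k_def by (rule Greatest_le_nat[OF _ bounded])
    then show False by simp
  qed
  moreover have "k + 1 \<in> {1..L}" using \<open>k < L\<close> by simp
  ultimately show "a (k + 1) < m" using assms(4) by fastforce
qed

theorem mainTheorem6:
  fixes u d R S0 K :: real and L N :: nat and q f :: "_"
  defines "a \<equiv> lat_a u d L"
  defines "lstar \<equiv> GREATEST l. l \<in> {1..L} \<and> a l > 1 + R"
  assumes "u > d" and "d > 0"
    and "a L < 1 + R" and "1 + R < a 1"
    and "\<forall>l\<in>{1..L}. a l \<noteq> 1 + R"
    and "S0 > 0" and "K \<ge> 0"
    and "f = (\<lambda>s. max (K - s) 0) \<or> f = (\<lambda>s. max (s - K) 0)"
    and "q \<in> mean_D a L (1 + R)"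
  shows "price0 R a L (Q2 R a lstar (lstar + 1)) S0 N f \<le> price0 R a L q S0 N f
         \<and> price0 R a L q S0 N f \<le> price0 R a L (Q2 R a 1 L) S0 N f"
proof -
  have antimono: "\<And>i j. 1 \<le> i \<Longrightarrow> i \<le> j \<Longrightarrow> j \<le> L \<Longrightarrow> a j \<le> a i"
    unfolding a_def using assms(3,4) by (intro lat_a_antimono) auto
  have "L \<noteq> 0"
  proof
    assume "L = 0"
    then have "a L = a 1" by (simp add: a_def lat_a_def)
    with assms(5,6) show False by simp
  qed
  have lstar: "1 \<le> lstar" "lstar < L" "1 + R < a lstar" "a (lstar + 1) < 1 + R"
    using greatest_index_above[of L a "1 + R", folded lstar_def] \<open>L \<noteq> 0\<close> assms(5-7) by auto
  have q: "\<And>l. l \<in> {1..L} \<Longrightarrow> 0 \<le> q l" "(\<Sum>l\<in>{1..L}. q l) = 1" "(\<Sum>l\<in>{1..L}. q l * a l) = 1 + R"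
    using assms(11) by (auto simp: mean_D_def)
  have f: "convex_on UNIV f" using assms(10) convex_on_put_payoff convex_on_call_payoff by metis
  have "0 < a L" unfolding a_def lat_a_def using assms(4) by simp
  then have R: "0 < 1 + R" using assms(5) by linarith
  have lower: "convex_le a {1..L} (Q2 R a lstar (lstar + 1)) q"
  proof (rule convex_le_Q2_inner[OF _ _ _ lstar(4,3) q])
    fix l assume "l \<in> {1..L}"
    then show "a l \<notin> {a (lstar + 1)<..<a lstar}"
      using antimono[of l lstar] antimono[of "lstar + 1" l] lstar by (cases "l \<le> lstar") auto
  qed (use lstar in auto)
  have upper: "convex_le a {1..L} q (Q2 R a 1 L)"
    using \<open>L \<noteq> 0\<close> assms(5,6) antimono q by (intro convex_le_Q2_outer) auto
  have "\<And>l. 0 \<le> Q2 R a lstar (lstar + 1) l" "\<And>l. 0 \<le> Q2 R a 1 L l"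
    using lstar assms(5,6) by (auto intro: Q2_nonneg)
  then show ?thesis
    using price0_mono_convex_le[OF _ q(1) lower f R] price0_mono_convex_le[OF q(1) _ upper f R] by blast
qed

end
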